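(* Let $T:\mathbf{Set}\to\mathbf{Set}$ be a functor with a diagonal-preserving lax extension $L$, let $\tau:(-)^n\to T$ be a natural transformation, and let $\lambda$ be the Moss lifting induced by $\tau$ (w.r.t. $L$). Then for every set $X$ and all $x_1,\dots,x_n\in X$, $$\lambda_X(\{x_1\},\dots,\{x_n\})=\{\tau_X(x_1,\dots,x_n)\}.$$ In particular $\lambda$ preserves singletons.
   Context: For relations $R\subseteq X\times Y$, $S\subseteq Y\times Z$, write $R^\circ\subseteq Y\times X$ for the converse and $R;S\subseteq X\times Z$ for the (diagrammatic) composite; functions are identified with their graphs; $\Delta_X$ is the diagonal (identity relation) on $X$. A lax extension of $T$ is an assignment $L$ mapping each relation $R\subseteq X\times Y$ to a relation $LR\subseteq TX\times TY$ such that $L(R^\circ)=(LR)^\circ$, $R'\subseteq R$ implies $LR'\subseteq LR$, $LR;LS\subseteq L(R;S)$, and $Tf\subseteq Lf$ for every function $f$. It is diagonal-preserving if $L\Delta_X\subseteq\Delta_{TX}$ for all $X$. Let $\in_X\subseteq X\times\mathcal{P}X$ be the element-of relation. The Moss lifting induced by a natural transformation $\tau:(-)^n\to T$ is the $n$-ary predicate lifting $\lambda_X(X_1,\dots,X_n)=\{t\in TX\mid (t,\tau_{\mathcal{P}X}(X_1,\dots,X_n))\in L(\in_X)\}$ for $X_1,\dots,X_n\subseteq X$. A predicate lifting $\lambda/n$ preserves singletons if $|\lambda_X(\{x_1\},\dots,\{x_n\})|=1$ for all sets $X$ and $x_i\in X$. *)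

theory Defs
  imports Main
begin

(* Sets are modelled as subsets X of a universe type 'u; the category Set
   (restricted to this universe) has as morphisms X -> Y the functions f
   with f ` X \<subseteq> Y, taken extensionally on X.  The functor T is given by
   its object part T :: 'u set => 't set and its morphism part Tmap X Y f. *)

definition maps_into :: "('u \<Rightarrow> 'u) \<Rightarrow> 'u set \<Rightarrow> 'u set \<Rightarrow> bool" where
  "maps_into f X Y \<longleftrightarrow> (\<forall>x\<in>X. f x \<in> Y)"

definition graph_on :: "'u set \<Rightarrow> ('u \<Rightarrow> 'v) \<Rightarrow> ('u \<times> 'v) set" where
  "graph_on X f = {(x, f x) | x. x \<in> X}"

definition set_functor ::
  "('u set \<Rightarrow> 't set) \<Rightarrow> ('u set \<Rightarrow> 'u set \<Rightarrow> ('u \<Rightarrow> 'u) \<Rightarrow> 't \<Rightarrow> 't) \<Rightarrow> bool" where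
  "set_functor T Tmap \<longleftrightarrow>
     (\<forall>X Y f. maps_into f X Y \<longrightarrow> (\<forall>t\<in>T X. Tmap X Y f t \<in> T Y)) \<and>
     (\<forall>X Y f g. (\<forall>x\<in>X. f x = g x) \<longrightarrow> (\<forall>t\<in>T X. Tmap X Y f t = Tmap X Y g t)) \<and>
     (\<forall>X. \<forall>t\<in>T X. Tmap X X id t = t) \<and>
     (\<forall>X Y Z f g. maps_into f X Y \<longrightarrow> maps_into g Y Z \<longrightarrow>
        (\<forall>t\<in>T X. Tmap X Z (g \<circ> f) t = Tmap Y Z g (Tmap X Y f t)))"

definition lax_extension ::
  "('u set \<Rightarrow> 't set) \<Rightarrow> ('u set \<Rightarrow> 'u set \<Rightarrow> ('u \<Rightarrow> 'u) \<Rightarrow> 't \<Rightarrow> 't)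
   \<Rightarrow> ('u set \<Rightarrow> 'u set \<Rightarrow> ('u \<times> 'u) set \<Rightarrow> ('t \<times> 't) set) \<Rightarrow> bool" where
  "lax_extension T Tmap L \<longleftrightarrow>
     (\<forall>X Y R. R \<subseteq> X \<times> Y \<longrightarrow> L X Y R \<subseteq> T X \<times> T Y) \<and>
     (\<forall>X Y R. R \<subseteq> X \<times> Y \<longrightarrow> L Y X (R\<inverse>) = (L X Y R)\<inverse>) \<and>
     (\<forall>X Y R R'. R' \<subseteq> R \<longrightarrow> R \<subseteq> X \<times> Y \<longrightarrow> L X Y R' \<subseteq> L X Y R) \<and>
     (\<forall>X Y Z R S. R \<subseteq> X \<times> Y \<longrightarrow> S \<subseteq> Y \<times> Z \<longrightarrow> L X Y R O L Y Z S \<subseteq> L X Z (R O S)) \<and>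
     (\<forall>X Y f. maps_into f X Y \<longrightarrow> graph_on (T X) (Tmap X Y f) \<subseteq> L X Y (graph_on X f))"

definition diagonal_preserving ::
  "('u set \<Rightarrow> 't set) \<Rightarrow> ('u set \<Rightarrow> 'u set \<Rightarrow> ('u \<times> 'u) set \<Rightarrow> ('t \<times> 't) set) \<Rightarrow> bool" where
  "diagonal_preserving T L \<longleftrightarrow> (\<forall>X. L X X (Id_on X) \<subseteq> Id_on (T X))"

(* tau : (-)^n -> T; an element of X^n is a list of length n with entries in X *)
definition nat_trans ::
  "nat \<Rightarrow> ('u set \<Rightarrow> 't set) \<Rightarrow> ('u set \<Rightarrow> 'u set \<Rightarrow> ('u \<Rightarrow> 'u) \<Rightarrow> 't \<Rightarrow> 't)
   \<Rightarrow> ('u set \<Rightarrow> 'u list \<Rightarrow> 't) \<Rightarrow> bool" where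
  "nat_trans n T Tmap \<tau> \<longleftrightarrow>
     (\<forall>X xs. length xs = n \<longrightarrow> set xs \<subseteq> X \<longrightarrow> \<tau> X xs \<in> T X) \<and>
     (\<forall>X Y f xs. maps_into f X Y \<longrightarrow> length xs = n \<longrightarrow> set xs \<subseteq> X \<longrightarrow>
        Tmap X Y f (\<tau> X xs) = \<tau> Y (map f xs))"

(* The universe used: 'a + 'a set, so that both a set X0 :: 'a set (as Inl ` X0)
   and its power set (as Inr ` Pow X0) are objects. *)
definition elem_rel :: "'a set \<Rightarrow> (('a + 'a set) \<times> ('a + 'a set)) set" where
  "elem_rel X0 = {(Inl x, Inr A) | x A. A \<subseteq> X0 \<and> x \<in> A}"

definition moss_lifting ::
  "(('a + 'a set) set \<Rightarrow> 't set)
   \<Rightarrow> (('a + 'a set) set \<Rightarrow> ('a + 'a set) set \<Rightarrow> (('a + 'a set) \<times> ('a + 'a set)) set \<Rightarrow> ('t \<times> 't) set)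
   \<Rightarrow> (('a + 'a set) set \<Rightarrow> ('a + 'a set) list \<Rightarrow> 't) \<Rightarrow> 'a set \<Rightarrow> 'a set list \<Rightarrow> 't set" where
  "moss_lifting T L \<tau> X0 Xs =
     {t \<in> T (Inl ` X0). (t, \<tau> (Inr ` Pow X0) (map Inr Xs)) \<in> L (Inl ` X0) (Inr ` Pow X0) (elem_rel X0)}"

end

theory Submission
  imports Defs
begin

text \<open>The singleton map \<open>s : X \<rightarrow> \<P>X\<close>, \<open>x \<mapsto> {x}\<close>, satisfies \<open>s \<subseteq> \<in>\<close> and \<open>\<in> ; s\<degree> \<subseteq> \<Delta>\<close>.
  So \<open>(t\<^sub>0, Ts t\<^sub>0) \<in> L s \<subseteq> L(\<in>)\<close>, and conversely \<open>(t, Ts t\<^sub>0) \<in> L(\<in>)\<close> together with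
  \<open>(Ts t\<^sub>0, t\<^sub>0) \<in> L(s\<degree>)\<close> gives \<open>(t, t\<^sub>0) \<in> L(\<in> ; s\<degree>) \<subseteq> L \<Delta> \<subseteq> \<Delta>\<close>. By naturality,
  \<open>Ts(\<tau>(x\<^sub>1,\<dots>,x\<^sub>n)) = \<tau>({x\<^sub>1},\<dots>,{x\<^sub>n})\<close>, which is the second argument of \<open>L(\<in>)\<close> in the
  Moss lifting.\<close>

lemma lax_extension_converse:
  "lax_extension T Tmap L \<Longrightarrow> R \<subseteq> X \<times> Y \<Longrightarrow> L Y X (R\<inverse>) = (L X Y R)\<inverse>"
  unfolding lax_extension_def by simp

lemma lax_extension_mono:
  "lax_extension T Tmap L \<Longrightarrow> R' \<subseteq> R \<Longrightarrow> R \<subseteq> X \<times> Y \<Longrightarrow> L X Y R' \<subseteq> L X Y R"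
  unfolding lax_extension_def by simp

lemma lax_extension_relcomp:
  "lax_extension T Tmap L \<Longrightarrow> R \<subseteq> X \<times> Y \<Longrightarrow> S \<subseteq> Y \<times> Z \<Longrightarrow>
   L X Y R O L Y Z S \<subseteq> L X Z (R O S)"
  unfolding lax_extension_def by simp

lemma lax_extension_graph:
  assumes "lax_extension T Tmap L" "maps_into f X Y" "t \<in> T X"
  shows "(t, Tmap X Y f t) \<in> L X Y (graph_on X f)"
proof -
  have "graph_on (T X) (Tmap X Y f) \<subseteq> L X Y (graph_on X f)"
    using assms(1,2) unfolding lax_extension_def by simp
  then show ?thesis using assms(3) by (auto simp: graph_on_def)
qed

lemma graph_on_subset_Times: "maps_into f X Y \<Longrightarrow> graph_on X f \<subseteq> X \<times> Y"
  by (auto simp: graph_on_def maps_into_def)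

lemma diagonal_preservingD:
  "diagonal_preserving T L \<Longrightarrow> (t, t') \<in> L X X (Id_on X) \<Longrightarrow> t = t'"
  unfolding diagonal_preserving_def by blast

lemma lax_extension_fibre_of_image:
  assumes lax: "lax_extension T Tmap L" and diag: "diagonal_preserving T L"
    and f: "maps_into f X Y" and R: "R \<subseteq> X \<times> Y"
    and graph_R: "graph_on X f \<subseteq> R" and R_graph: "R O (graph_on X f)\<inverse> \<subseteq> Id_on X"
    and t0: "t0 \<in> T X"
  shows "{t \<in> T X. (t, Tmap X Y f t0) \<in> L X Y R} = {t0}"
proof -
  let ?G = "graph_on X f"
  have G: "?G \<subseteq> X \<times> Y" using f by (rule graph_on_subset_Times)
  have t0_G: "(t0, Tmap X Y f t0) \<in> L X Y ?G"
    using lax f t0 by (rule lax_extension_graph)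
  have "t = t0" if "(t, Tmap X Y f t0) \<in> L X Y R" for t
  proof -
    have "(Tmap X Y f t0, t0) \<in> L Y X (?G\<inverse>)"
      using t0_G lax_extension_converse[OF lax G] by blast
    with that have "(t, t0) \<in> L X X (R O ?G\<inverse>)"
      using lax_extension_relcomp[OF lax R, of "?G\<inverse>" X] G by blast
    then have "(t, t0) \<in> L X X (Id_on X)"
      using lax_extension_mono[OF lax R_graph Id_on_subset_Times] by blast
    then show ?thesis by (rule diagonal_preservingD[OF diag])
  qed
  moreover have "(t0, Tmap X Y f t0) \<in> L X Y R"
    using t0_G lax_extension_mono[OF lax graph_R R] by blast
  ultimately show ?thesis using t0 by blast
qed

lemma nat_trans_in:
  "nat_trans n T Tmap \<tau> \<Longrightarrow> length xs = n \<Longrightarrow> set xs \<subseteq> X \<Longrightarrow> \<tau> X xs \<in> T X"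
  unfolding nat_trans_def by blast

lemma nat_trans_natural:
  "nat_trans n T Tmap \<tau> \<Longrightarrow> maps_into f X Y \<Longrightarrow> length xs = n \<Longrightarrow> set xs \<subseteq> X \<Longrightarrow>
   Tmap X Y f (\<tau> X xs) = \<tau> Y (map f xs)"
  unfolding nat_trans_def by blast

definition singleton_map :: "'a + 'a set \<Rightarrow> 'a + 'a set" where
  "singleton_map v = (case v of Inl x \<Rightarrow> Inr {x} | Inr A \<Rightarrow> Inr A)"

lemma maps_into_singleton_map: "maps_into singleton_map (Inl ` X0) (Inr ` Pow X0)"
  by (auto simp: maps_into_def singleton_map_def)

lemma map_singleton_map_Inl: "map singleton_map (map Inl xs) = map Inr (map (\<lambda>x. {x}) xs)"
  by (simp add: singleton_map_def)

lemma elem_rel_subset_Times: "elem_rel X0 \<subseteq> Inl ` X0 \<times> Inr ` Pow X0"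
  by (auto simp: elem_rel_def)

lemma graph_singleton_map_subset_elem_rel:
  "graph_on (Inl ` X0) singleton_map \<subseteq> elem_rel X0"
  by (auto simp: graph_on_def elem_rel_def singleton_map_def)

lemma elem_rel_relcomp_graph_singleton_map:
  "elem_rel X0 O (graph_on (Inl ` X0) singleton_map)\<inverse> \<subseteq> Id_on (Inl ` X0)"
  by (auto simp: elem_rel_def graph_on_def singleton_map_def)

theorem mainTheorem3:
  fixes T :: "('a + 'a set) set \<Rightarrow> 't set"
    and Tmap :: "('a + 'a set) set \<Rightarrow> ('a + 'a set) set \<Rightarrow> (('a + 'a set) \<Rightarrow> ('a + 'a set)) \<Rightarrow> 't \<Rightarrow> 't"
    and L :: "('a + 'a set) set \<Rightarrow> ('a + 'a set) set \<Rightarrow> (('a + 'a set) \<times> ('a + 'a set)) set \<Rightarrow> ('t \<times> 't) set"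
    and \<tau> :: "('a + 'a set) set \<Rightarrow> ('a + 'a set) list \<Rightarrow> 't"
    and n :: nat
    and X0 :: "'a set"
    and xs :: "'a list"
  assumes "set_functor T Tmap"
    and "lax_extension T Tmap L"
    and "diagonal_preserving T L"
    and "nat_trans n T Tmap \<tau>"
    and "length xs = n"
    and "set xs \<subseteq> X0"
  shows "moss_lifting T L \<tau> X0 (map (\<lambda>x. {x}) xs) = {\<tau> (Inl ` X0) (map Inl xs)}
         \<and> card (moss_lifting T L \<tau> X0 (map (\<lambda>x. {x}) xs)) = 1"
proof -
  let ?t0 = "\<tau> (Inl ` X0) (map Inl xs)"
  have xs: "length (map Inl xs) = n" "set (map Inl xs) \<subseteq> Inl ` X0"
    using assms(5,6) by auto
  have t0: "?t0 \<in> T (Inl ` X0)"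
    using assms(4) xs by (rule nat_trans_in)
  have "Tmap (Inl ` X0) (Inr ` Pow X0) singleton_map ?t0
        = \<tau> (Inr ` Pow X0) (map Inr (map (\<lambda>x. {x}) xs))"
    using nat_trans_natural[OF assms(4) maps_into_singleton_map xs]
    unfolding map_singleton_map_Inl .
  then have "moss_lifting T L \<tau> X0 (map (\<lambda>x. {x}) xs) = {?t0}"
    unfolding moss_lifting_def
    using lax_extension_fibre_of_image[OF assms(2,3) maps_into_singleton_map
        elem_rel_subset_Times graph_singleton_map_subset_elem_rel
        elem_rel_relcomp_graph_singleton_map t0]
    by simp
  then show ?thesis by simp
qed

end
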